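(* Let $A_o,A_i\in\mathbb R^{n_y\times n_x}$, let $B_o,B_i\in\mathbb R^{n_y\times n_y}$ and $C_o,C_i\in\mathbb R^{n_x\times n_x}$ be invertible. The outer inclusion $y\in\{(A_o+B_o\Delta C_o)x:\|\Delta\|\le1\}$ contains the inner inclusion $y\in\{(A_i+B_i\Delta C_i)x:\|\Delta\|\le1\}$ if and only if $$\|\tilde A+\tilde B\Delta\tilde C\|\le 1\quad\text{for all }\Delta\in\mathbb C^{n_y\times n_x}\text{ with }\|\Delta\|\le1,$$ where $\tilde B=B_o^{-1}B_i$, $\tilde A=B_o^{-1}(A_i-A_o)C_o^{-1}$, $\tilde C=C_iC_o^{-1}$.
   Context: $\|\cdot\|$ is the spectral norm. The outer inclusion contains the inner one if every pair $(x,y)\in\mathbb C^{n_x}\times\mathbb C^{n_y}$ satisfying the inner inclusion also satisfies the outer inclusion. *)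

theory Defs
  imports "HOL-Analysis.Analysis"
begin

text \<open>Spectral norm of a complex matrix: operator norm induced by the Euclidean
  norm on complex vectors (norm on complex^'n is the l2 norm).\<close>
definition spec_norm :: "complex^'n^'m \<Rightarrow> real" where
  "spec_norm M = onorm (\<lambda>x. M *v x)"

definition cmat :: "real^'n^'m \<Rightarrow> complex^'n^'m" where
  "cmat M = (\<chi> i j. complex_of_real (M $ i $ j))"

definition in_incl ::
  "real^'nx^'ny \<Rightarrow> real^'ny^'ny \<Rightarrow> real^'nx^'nx \<Rightarrow> complex^'nx \<Rightarrow> complex^'ny \<Rightarrow> bool" where
  "in_incl A B C x y \<longleftrightarrow>
     (\<exists>\<Delta>::complex^'nx^'ny. spec_norm \<Delta> \<le> 1 \<and> y = (cmat A + cmat B ** \<Delta> ** cmat C) *v x)"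

end

theory Submission imports Defs begin

(* Put z = Co x.  A contraction sending z to any w with norm w \<le> norm z exists (a rank-one
   matrix), so y lies in the outer inclusion iff norm (Bo\<^sup>-\<^sup>1 (y - Ao x)) \<le> norm z.  For
   y = (Ai + Bi \<Delta> Ci) x the left-hand side is norm ((A' + B' \<Delta> C') z) with the transformed
   matrices A', B', C' of the theorem, and z ranges over all vectors as x does because Co is
   invertible; so containment says precisely that every A' + B' \<Delta> C' is a contraction. *)

lemma cmat_diff: "cmat (A - B) = cmat A - cmat B"
  by (simp add: cmat_def vec_eq_iff)

lemma cmat_mult: "cmat (A ** B) = cmat A ** cmat B"
  by (simp add: cmat_def matrix_matrix_mult_def vec_eq_iff)

lemma cmat_mat_1: "cmat (mat 1) = mat 1"
  by (simp add: cmat_def vec_eq_iff mat_def)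

lemma matrix_inv_right:
  fixes A :: "'a::semiring_1^'n^'m"
  assumes "invertible A"
  shows "A ** matrix_inv A = mat 1"
  using someI_ex[OF assms[unfolded invertible_def]] unfolding matrix_inv_def by auto

lemma matrix_inv_left:
  fixes A :: "'a::semiring_1^'n^'m"
  assumes "invertible A"
  shows "matrix_inv A ** A = mat 1"
  using someI_ex[OF assms[unfolded invertible_def]] unfolding matrix_inv_def by auto

lemma cmat_matrix_inv_cancel_left:
  assumes "invertible A"
  shows "cmat (matrix_inv A) *v (cmat A *v v) = v"
  by (simp add: matrix_vector_mul_assoc cmat_mult[symmetric] matrix_inv_left[OF assms] cmat_mat_1)

lemma cmat_cancel_matrix_inv_left:
  assumes "invertible A"
  shows "cmat A *v (cmat (matrix_inv A) *v v) = v"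
  by (simp add: matrix_vector_mul_assoc cmat_mult[symmetric] matrix_inv_right[OF assms] cmat_mat_1)

lemma surj_cmat_vector_mult:
  assumes "invertible A"
  shows "surj (\<lambda>x. cmat A *v x)"
  by (metis surjI cmat_cancel_matrix_inv_left[OF assms])

lemma matrix_matrix_mult_add_rdistrib:
  fixes A :: "'a::semiring_1^'n^'m"
  shows "(A + B) ** C = A ** C + B ** C"
  by (vector matrix_matrix_mult_def sum.distrib[symmetric] field_simps)

lemma spec_norm_le_one_iff:
  "spec_norm M \<le> 1 \<longleftrightarrow> (\<forall>z. norm (M *v z) \<le> norm z)"
proof
  assume M: "spec_norm M \<le> 1"
  show "\<forall>z. norm (M *v z) \<le> norm z"
  proof
    fix z
    have "norm (M *v z) \<le> spec_norm M * norm z"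
      unfolding spec_norm_def by (rule onorm) (simp add: linear_conv_bounded_linear)
    also have "\<dots> \<le> norm z"
      using mult_right_mono[OF M norm_ge_zero] by simp
    finally show "norm (M *v z) \<le> norm z" .
  qed
next
  assume "\<forall>z. norm (M *v z) \<le> norm z"
  then show "spec_norm M \<le> 1"
    unfolding spec_norm_def by (intro onorm_le) simp
qed

lemma norm_sum_cnj_mult_le:
  fixes z v :: "complex^'n"
  shows "norm (\<Sum>j\<in>UNIV. cnj (z$j) * v$j) \<le> norm z * norm v"
proof -
  have "norm (\<Sum>j\<in>UNIV. cnj (z$j) * v$j) \<le> (\<Sum>j\<in>UNIV. \<bar>norm (z$j)\<bar> * \<bar>norm (v$j)\<bar>)"
    by (rule order_trans[OF norm_sum]) (simp add: norm_mult)
  also have "\<dots> \<le> L2_set (\<lambda>j. norm (z$j)) UNIV * L2_set (\<lambda>j. norm (v$j)) UNIV"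
    by (rule L2_set_mult_ineq)
  finally show ?thesis
    by (simp add: norm_vec_def)
qed

lemma norm_vec_scale:
  fixes w :: "complex^'n"
  shows "norm (\<chi> i. c * w$i) = norm c * norm w"
  unfolding norm_vec_def by (simp add: L2_set_right_distrib norm_mult)

lemma sum_cnj_mult_self:
  fixes z :: "complex^'n"
  shows "(\<Sum>j\<in>UNIV. cnj (z$j) * z$j) = complex_of_real ((norm z)\<^sup>2)"
proof -
  have "(norm z)\<^sup>2 = (\<Sum>j\<in>UNIV. (norm (z$j))\<^sup>2)"
    unfolding norm_vec_def L2_set_def by (simp add: sum_nonneg)
  then show ?thesis
    by (simp add: complex_norm_square[symmetric] mult.commute del: of_real_power)
qed

lemma exists_contraction_mapsto:
  fixes z :: "complex^'n" and w :: "complex^'m"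
  assumes "norm w \<le> norm z"
  shows "\<exists>D. spec_norm D \<le> 1 \<and> D *v z = w"
proof (cases "z = 0")
  case True
  with assms show ?thesis
    by (intro exI[of _ 0]) (simp add: spec_norm_le_one_iff)
next
  case False
  define D where "D = (\<chi> i j. w$i * cnj (z$j) / complex_of_real ((norm z)\<^sup>2))"
  have D_mult: "D *v v = (\<chi> i. ((\<Sum>j\<in>UNIV. cnj (z$j) * v$j) / complex_of_real ((norm z)\<^sup>2)) * w$i)"
    for v
    by (simp add: D_def matrix_vector_mult_def vec_eq_iff sum_distrib_left sum_divide_distrib
        mult_ac del: of_real_power)
  have "norm (D *v v) \<le> norm v" for v
  proof -
    have "norm (D *v v) = norm (\<Sum>j\<in>UNIV. cnj (z$j) * v$j) / (norm z)\<^sup>2 * norm w"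
      unfolding D_mult norm_vec_scale by (simp add: norm_divide del: of_real_power)
    also have "\<dots> \<le> norm z * norm v / (norm z)\<^sup>2 * norm z"
      by (intro mult_mono divide_right_mono norm_sum_cnj_mult_le assms) auto
    also have "\<dots> = norm v"
      using False by (simp add: power2_eq_square)
    finally show ?thesis .
  qed
  moreover have "D *v z = w"
  proof -
    have nz: "complex_of_real ((norm z)\<^sup>2) \<noteq> 0"
      using False by simp
    then show ?thesis
      unfolding D_mult sum_cnj_mult_self divide_self[OF nz] by (simp add: vec_eq_iff)
  qed
  ultimately show ?thesis
    by (auto simp: spec_norm_le_one_iff)
qed

lemma in_incl_iff_norm_le:
  assumes "invertible B"
  shows "in_incl A B C x y \<longleftrightarrow> norm (cmat (matrix_inv B) *v (y - cmat A *v x)) \<le> norm (cmat C *v x)"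
proof
  assume "in_incl A B C x y"
  then obtain \<Delta> where \<Delta>: "spec_norm \<Delta> \<le> 1" "y = (cmat A + cmat B ** \<Delta> ** cmat C) *v x"
    unfolding in_incl_def by blast
  then have "cmat (matrix_inv B) *v (y - cmat A *v x) = \<Delta> *v (cmat C *v x)"
    by (simp add: matrix_vector_mult_add_rdistrib matrix_vector_mul_assoc[symmetric]
        cmat_matrix_inv_cancel_left[OF assms])
  with \<Delta>(1) show "norm (cmat (matrix_inv B) *v (y - cmat A *v x)) \<le> norm (cmat C *v x)"
    by (simp add: spec_norm_le_one_iff)
next
  assume "norm (cmat (matrix_inv B) *v (y - cmat A *v x)) \<le> norm (cmat C *v x)"
  then obtain D where D: "spec_norm D \<le> 1" "D *v (cmat C *v x) = cmat (matrix_inv B) *v (y - cmat A *v x)"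
    using exists_contraction_mapsto by blast
  then have "y = (cmat A + cmat B ** D ** cmat C) *v x"
    by (simp add: matrix_vector_mult_add_rdistrib matrix_vector_mul_assoc[symmetric]
        cmat_cancel_matrix_inv_left[OF assms])
  with D(1) show "in_incl A B C x y"
    unfolding in_incl_def by blast
qed

lemma transformed_uncertainty_mult:
  assumes "invertible C"
  shows "(cmat (matrix_inv B ** (Ai - Ao) ** matrix_inv C)
            + cmat (matrix_inv B ** Bi) ** \<Delta> ** cmat (Ci ** matrix_inv C)) *v (cmat C *v x)
    = cmat (matrix_inv B) *v ((cmat Ai + cmat Bi ** \<Delta> ** cmat Ci) *v x - cmat Ao *v x)"
    (is "?M *v _ = _")
proof -
  have C_inv: "cmat (matrix_inv C) ** cmat C = mat 1"
    by (simp add: cmat_mult[symmetric] matrix_inv_left[OF assms] cmat_mat_1)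
  have "?M ** cmat C
      = cmat (matrix_inv B) ** (cmat Ai - cmat Ao) ** (cmat (matrix_inv C) ** cmat C)
        + cmat (matrix_inv B) ** (cmat Bi ** \<Delta> ** cmat Ci) ** (cmat (matrix_inv C) ** cmat C)"
    by (simp add: cmat_mult cmat_diff matrix_matrix_mult_add_rdistrib matrix_mul_assoc)
  also have "\<dots> = cmat (matrix_inv B) ** (cmat Ai - cmat Ao + cmat Bi ** \<Delta> ** cmat Ci)"
    by (simp add: C_inv matrix_add_ldistrib)
  finally have "?M ** cmat C
      = cmat (matrix_inv B) ** (cmat Ai - cmat Ao + cmat Bi ** \<Delta> ** cmat Ci)" .
  moreover have "(cmat Ai + cmat Bi ** \<Delta> ** cmat Ci) *v x - cmat Ao *v x
      = (cmat Ai - cmat Ao + cmat Bi ** \<Delta> ** cmat Ci) *v x"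
    by (simp add: algebra_simps)
  ultimately show ?thesis
    by (simp add: matrix_vector_mul_assoc)
qed

theorem lemma1:
  fixes Ao Ai :: "real^'nx^'ny" and Bo Bi :: "real^'ny^'ny" and Co Ci :: "real^'nx^'nx"
  assumes "invertible Bo" "invertible Bi" "invertible Co" "invertible Ci"
  shows "(\<forall>x y. in_incl Ai Bi Ci x y \<longrightarrow> in_incl Ao Bo Co x y) \<longleftrightarrow>
    (\<forall>\<Delta>::complex^'nx^'ny. spec_norm \<Delta> \<le> 1 \<longrightarrow>
       spec_norm (cmat (matrix_inv Bo ** (Ai - Ao) ** matrix_inv Co)
                  + cmat (matrix_inv Bo ** Bi) ** \<Delta> ** cmat (Ci ** matrix_inv Co)) \<le> 1)"
proof -
  define M where "M \<Delta> = cmat (matrix_inv Bo ** (Ai - Ao) ** matrix_inv Co)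
                  + cmat (matrix_inv Bo ** Bi) ** \<Delta> ** cmat (Ci ** matrix_inv Co)" for \<Delta>
  have "(\<forall>x y. in_incl Ai Bi Ci x y \<longrightarrow> in_incl Ao Bo Co x y) \<longleftrightarrow>
      (\<forall>\<Delta> x. spec_norm \<Delta> \<le> 1 \<longrightarrow> in_incl Ao Bo Co x ((cmat Ai + cmat Bi ** \<Delta> ** cmat Ci) *v x))"
    unfolding in_incl_def[of Ai] by blast
  also have "\<dots> \<longleftrightarrow> (\<forall>\<Delta> x. spec_norm \<Delta> \<le> 1 \<longrightarrow> norm (M \<Delta> *v (cmat Co *v x)) \<le> norm (cmat Co *v x))"
    by (simp only: in_incl_iff_norm_le[OF assms(1)] transformed_uncertainty_mult[OF assms(3)] M_def)
  also have "\<dots> \<longleftrightarrow> (\<forall>\<Delta>. spec_norm \<Delta> \<le> 1 \<longrightarrow> (\<forall>z. norm (M \<Delta> *v z) \<le> norm z))"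
    using surj_cmat_vector_mult[OF assms(3)] by (metis surjD)
  finally show ?thesis
    by (simp add: spec_norm_le_one_iff M_def)
qed

end
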